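(* Every $\cap$-edge simplicial graph is split.
   Context: A clique $C$ is simplicial if $C=N[v]$ for some vertex $v$; a graph is edge simplicial if every edge lies in a simplicial clique; it is $\cap$-edge simplicial if both it and its complement are edge simplicial. A graph is split if its vertex set can be partitioned into a clique and a stable set. *)

theory Defs
  imports Main
begin

definition graph :: "'a set \<Rightarrow> ('a \<Rightarrow> 'a \<Rightarrow> bool) \<Rightarrow> bool" where
  "graph V E \<longleftrightarrow> (\<forall>x y. E x y \<longrightarrow> x \<in> V \<and> y \<in> V \<and> x \<noteq> y \<and> E y x)"

definition complement :: "'a set \<Rightarrow> ('a \<Rightarrow> 'a \<Rightarrow> bool) \<Rightarrow> ('a \<Rightarrow> 'a \<Rightarrow> bool)" where
  "complement V E = (\<lambda>x y. x \<in> V \<and> y \<in> V \<and> x \<noteq> y \<and> \<not> E x y)"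

definition closed_nbhd :: "'a set \<Rightarrow> ('a \<Rightarrow> 'a \<Rightarrow> bool) \<Rightarrow> 'a \<Rightarrow> 'a set" where
  "closed_nbhd V E v = insert v {u \<in> V. E v u}"

definition is_clique :: "'a set \<Rightarrow> ('a \<Rightarrow> 'a \<Rightarrow> bool) \<Rightarrow> 'a set \<Rightarrow> bool" where
  "is_clique V E C \<longleftrightarrow> C \<subseteq> V \<and> (\<forall>x\<in>C. \<forall>y\<in>C. x \<noteq> y \<longrightarrow> E x y)"

definition is_stable :: "'a set \<Rightarrow> ('a \<Rightarrow> 'a \<Rightarrow> bool) \<Rightarrow> 'a set \<Rightarrow> bool" where
  "is_stable V E S \<longleftrightarrow> S \<subseteq> V \<and> (\<forall>x\<in>S. \<forall>y\<in>S. \<not> E x y)"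

definition simplicial_clique :: "'a set \<Rightarrow> ('a \<Rightarrow> 'a \<Rightarrow> bool) \<Rightarrow> 'a set \<Rightarrow> bool" where
  "simplicial_clique V E C \<longleftrightarrow> is_clique V E C \<and> (\<exists>v\<in>V. C = closed_nbhd V E v)"

definition edge_simplicial :: "'a set \<Rightarrow> ('a \<Rightarrow> 'a \<Rightarrow> bool) \<Rightarrow> bool" where
  "edge_simplicial V E \<longleftrightarrow>
     (\<forall>x y. E x y \<longrightarrow> (\<exists>C. simplicial_clique V E C \<and> x \<in> C \<and> y \<in> C))"

definition cap_edge_simplicial :: "'a set \<Rightarrow> ('a \<Rightarrow> 'a \<Rightarrow> bool) \<Rightarrow> bool" where
  "cap_edge_simplicial V E \<longleftrightarrow> edge_simplicial V E \<and> edge_simplicial V (complement V E)"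

definition split_graph :: "'a set \<Rightarrow> ('a \<Rightarrow> 'a \<Rightarrow> bool) \<Rightarrow> bool" where
  "split_graph V E \<longleftrightarrow>
     (\<exists>K S. K \<union> S = V \<and> K \<inter> S = {} \<and> is_clique V E K \<and> is_stable V E S)"

end

theory Submission
  imports Defs
begin

text \<open>
  Call \<open>v\<close> simplicial if \<open>N[v]\<close> is a clique and cosimplicial if it is simplicial in the
  complement. Edge simpliciality says that every edge lies in \<open>N[v]\<close> of a simplicial \<open>v\<close>,
  so a vertex that is not simplicial is a proper neighbour of a simplicial vertex; dually, a
  vertex that is not cosimplicial is a proper non-neighbour of a cosimplicial vertex. The key
  observation is that no vertex can be both at once: the simplicial vertex and the cosimplicial
  vertex would have to be adjacent or not, and either way one of the two cliques is violated.
  Hence every vertex is simplicial or cosimplicial. If some vertex \<open>x\<close> is both, then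
  \<open>N[x]\<close> and its complement form a split partition. Otherwise the cosimplicial vertices form a
  clique and the remaining (simplicial) vertices a stable set, again by the key observation.
\<close>

definition simplicial_vertex :: "'a set \<Rightarrow> ('a \<Rightarrow> 'a \<Rightarrow> bool) \<Rightarrow> 'a \<Rightarrow> bool" where
  "simplicial_vertex V E v \<longleftrightarrow> is_clique V E (closed_nbhd V E v)"

abbreviation cosimplicial_vertex :: "'a set \<Rightarrow> ('a \<Rightarrow> 'a \<Rightarrow> bool) \<Rightarrow> 'a \<Rightarrow> bool" where
  "cosimplicial_vertex V E \<equiv> simplicial_vertex V (complement V E)"

lemma graph_edgeD:
  assumes "graph V E" and "E x y"
  shows "x \<in> V" and "y \<in> V" and "x \<noteq> y" and "E y x"
  using assms unfolding graph_def by blast+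

lemma mem_closed_nbhd_complement:
  "x \<in> closed_nbhd V (complement V E) w \<longleftrightarrow> x = w \<or> complement V E w x"
  unfolding closed_nbhd_def complement_def by auto

lemma simplicial_vertex_if_isolated:
  assumes "v \<in> V" and "\<forall>u. \<not> E v u"
  shows "simplicial_vertex V E v"
  using assms unfolding simplicial_vertex_def is_clique_def closed_nbhd_def by auto

lemma adjacent_simplicial_vertex_if_not_simplicial:
  assumes es: "edge_simplicial V E" and x: "x \<in> V" "\<not> simplicial_vertex V E x"
  obtains v where "simplicial_vertex V E v" and "E v x"
proof -
  obtain y where "E x y"
    using simplicial_vertex_if_isolated[OF x(1)] x(2) by blast
  with es obtain C where C: "simplicial_clique V E C" "x \<in> C"
    unfolding edge_simplicial_def by blast
  then obtain v where "C = closed_nbhd V E v"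
    unfolding simplicial_clique_def by blast
  with C have v: "simplicial_vertex V E v" "x \<in> closed_nbhd V E v"
    unfolding simplicial_clique_def simplicial_vertex_def by simp_all
  moreover from v(1) x(2) have "x \<noteq> v"
    by blast
  ultimately have "E v x"
    unfolding closed_nbhd_def by blast
  with v(1) show thesis
    by (rule that)
qed

lemma is_stable_if_clique_in_complement:
  assumes "graph V E" and "is_clique V (complement V E) C"
  shows "is_stable V E C"
  using assms(2) graph_edgeD(3)[OF assms(1)]
  unfolding is_stable_def is_clique_def complement_def by blast

lemma not_simplicial_neighbour_and_cosimplicial_non_neighbour:
  assumes g: "graph V E"
    and v: "simplicial_vertex V E v" and w: "cosimplicial_vertex V E w"
    and vz: "E v z" and wz: "complement V E w z"
  shows False
proof (cases "E v w")
  case True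
  with vz wz have "w \<in> closed_nbhd V E v" "z \<in> closed_nbhd V E v" "w \<noteq> z"
    using graph_edgeD(2)[OF g vz] unfolding closed_nbhd_def complement_def by auto
  with v wz show False
    unfolding simplicial_vertex_def is_clique_def complement_def by blast
next
  case False
  then have "\<not> E w v"
    using graph_edgeD(4)[OF g] by blast
  moreover have "w \<noteq> v"
    using vz wz unfolding complement_def by blast
  ultimately have "complement V E w v"
    using graph_edgeD(1)[OF g vz] wz unfolding complement_def by blast
  with wz have "v \<in> closed_nbhd V (complement V E) w" "z \<in> closed_nbhd V (complement V E) w"
    by (simp_all add: mem_closed_nbhd_complement)
  with is_stable_if_clique_in_complement[OF g] w vz show False
    unfolding simplicial_vertex_def is_stable_def by blast
qed

lemma split_if_simplicial_and_cosimplicial: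
  assumes g: "graph V E"
    and x: "simplicial_vertex V E x" "cosimplicial_vertex V E x"
  shows "split_graph V E"
proof -
  have clique: "is_clique V E (closed_nbhd V E x)"
    using x(1) unfolding simplicial_vertex_def .
  then have "x \<in> V"
    unfolding is_clique_def closed_nbhd_def by blast
  then have "V - closed_nbhd V E x \<subseteq> closed_nbhd V (complement V E) x"
    unfolding closed_nbhd_def complement_def by auto
  then have "is_stable V E (V - closed_nbhd V E x)"
    using is_stable_if_clique_in_complement[OF g] x(2)
    unfolding simplicial_vertex_def is_stable_def by blast
  moreover have "closed_nbhd V E x \<union> (V - closed_nbhd V E x) = V"
    using clique unfolding is_clique_def by blast
  ultimately show ?thesis
    using clique unfolding split_graph_def by blast
qed

lemma simplicial_or_cosimplicial:
  assumes g: "graph V E" and es: "edge_simplicial V E"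
    and es_compl: "edge_simplicial V (complement V E)" and z: "z \<in> V"
  shows "simplicial_vertex V E z \<or> cosimplicial_vertex V E z"
proof (rule ccontr)
  assume "\<not> (simplicial_vertex V E z \<or> cosimplicial_vertex V E z)"
  then obtain v w where "simplicial_vertex V E v" "E v z"
    and "cosimplicial_vertex V E w" "complement V E w z"
    using adjacent_simplicial_vertex_if_not_simplicial[OF es z]
      adjacent_simplicial_vertex_if_not_simplicial[OF es_compl z] by metis
  then show False
    using not_simplicial_neighbour_and_cosimplicial_non_neighbour[OF g] by blast
qed

lemma split_if_no_simplicial_and_cosimplicial:
  assumes g: "graph V E" and es: "edge_simplicial V E"
    and es_compl: "edge_simplicial V (complement V E)"
    and none: "\<And>x. simplicial_vertex V E x \<Longrightarrow> \<not> cosimplicial_vertex V E x"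
  shows "split_graph V E"
proof -
  define K where "K = {w \<in> V. cosimplicial_vertex V E w}"
  note no_both = not_simplicial_neighbour_and_cosimplicial_non_neighbour[OF g]
  show ?thesis
    unfolding split_graph_def
  proof (intro exI conjI)
    show "is_clique V E K"
      unfolding is_clique_def
    proof (intro conjI ballI impI)
      fix w w' assume w: "w \<in> K" and w': "w' \<in> K" and "w \<noteq> w'"
      then have "\<not> simplicial_vertex V E w"
        using none unfolding K_def by blast
      then obtain v where v: "simplicial_vertex V E v" "E v w"
        using adjacent_simplicial_vertex_if_not_simplicial[OF es] w unfolding K_def by blast
      have "\<not> complement V E w' w"
        using no_both[OF v(1) _ v(2)] w' unfolding K_def by blast
      then show "E w w'"
        using w w' \<open>w \<noteq> w'\<close> graph_edgeD(4)[OF g] unfolding K_def complement_def by blast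
    qed (auto simp: K_def)
    show "is_stable V E (V - K)"
      unfolding is_stable_def
    proof (intro conjI ballI notI)
      fix v v' assume v: "v \<in> V - K" and v': "v' \<in> V - K" and "E v v'"
      obtain w where w: "cosimplicial_vertex V E w" "complement V E w v"
        using adjacent_simplicial_vertex_if_not_simplicial[OF es_compl] v unfolding K_def by blast
      have "simplicial_vertex V E v'"
        using simplicial_or_cosimplicial[OF g es es_compl] v' unfolding K_def by blast
      then show False
        using no_both[OF _ w(1) _ w(2)] graph_edgeD(4)[OF g \<open>E v v'\<close>] by blast
    qed auto
  qed (auto simp: K_def)
qed

theorem proposition27:
  fixes V :: "'a set" and E :: "'a \<Rightarrow> 'a \<Rightarrow> bool"
  assumes "finite V" and "graph V E" and "cap_edge_simplicial V E"
  shows "split_graph V E"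
proof (cases "\<exists>x. simplicial_vertex V E x \<and> cosimplicial_vertex V E x")
  case True
  then show ?thesis
    using split_if_simplicial_and_cosimplicial[OF assms(2)] by blast
next
  case False
  then show ?thesis
    using split_if_no_simplicial_and_cosimplicial[OF assms(2)] assms(3)
    unfolding cap_edge_simplicial_def by blast
qed

end
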